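(* The sum over all finite groups $G$ of the ring homomorphisms $\mathrm{B}^\times(G)\to\mathrm{B}(\mathcal{R})$, $$\bigoplus_G\mathrm{B}^\times(G)\longrightarrow\mathrm{B}(\mathcal{R}),$$ is surjective.
   Context: A rack is a set $R$ with a binary operation $\rhd$ such that every left multiplication $\ell_a\colon b\mapsto a\rhd b$ is a bijection and $a\rhd(b\rhd c)=(a\rhd b)\rhd(a\rhd c)$ for all $a,b,c$. A subrack is a subset $S$ with $\ell_s(S)=S$ for all $s\in S$; a decomposition of $R$ into $S$ and $T$ means $S,T$ are disjoint subracks (possibly empty) with $S\cup T=R$. The Burnside ring of finite racks $\mathrm{B}(\mathcal{R})$ is the abelian group generated by symbols $b(R)$, one for each finite rack $R$, subject to $b(R_1)=b(R_2)$ whenever $R_1\cong R_2$ and $b(R)=b(S)+b(T)$ whenever $R$ decomposes into $S$ and $T$, with ring structure $b(R)b(R')=b(R\times R')$. For a finite group $G$, a crossed $G$-set is a finite $G$-set $X$ with a $G$-equivariant map $\delta\colon X\to\mathrm{Ad}(G)$, where $\mathrm{Ad}(G)$ is $G$ with conjugation action. The crossed Burnside ring $\mathrm{B}^\times(G)$ is the Grothendieck group of isomorphism classes of finite crossed $G$-sets with respect to disjoint union (with its ring structure). The homomorphism $\mathrm{B}^\times(G)\to\mathrm{B}(\mathcal{R})$ sends the class of $\delta\colon X\to\mathrm{Ad}(G)$ to $b(X,\rhd)$, where $x\rhd y=\delta(x)y$. *)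

theory Defs
  imports "HOL-Algebra.Free_Abelian_Groups" "HOL-Algebra.Group_Action"
begin

type_synonym rack = "nat set \<times> (nat \<Rightarrow> nat \<Rightarrow> nat)"

definition is_rack :: "nat set \<Rightarrow> (nat \<Rightarrow> nat \<Rightarrow> nat) \<Rightarrow> bool" where
  "is_rack R op \<longleftrightarrow>
     (\<forall>a\<in>R. bij_betw (op a) R R) \<and>
     (\<forall>a\<in>R. \<forall>b\<in>R. \<forall>c\<in>R. op a (op b c) = op (op a b) (op a c))"

definition finite_racks :: "rack set" where
  "finite_racks = {(R, op). finite R \<and> is_rack R op}"

definition rack_iso :: "rack \<Rightarrow> rack \<Rightarrow> bool" where
  "rack_iso X Y \<longleftrightarrow>
     (\<exists>f. bij_betw f (fst X) (fst Y) \<and>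
          (\<forall>a\<in>fst X. \<forall>b\<in>fst X. f (snd X a b) = snd Y (f a) (f b)))"

definition is_subrack :: "nat set \<Rightarrow> (nat \<Rightarrow> nat \<Rightarrow> nat) \<Rightarrow> nat set \<Rightarrow> bool" where
  "is_subrack R op S \<longleftrightarrow> S \<subseteq> R \<and> (\<forall>s\<in>S. op s ` S = S)"

definition rack_decomp :: "nat set \<Rightarrow> (nat \<Rightarrow> nat \<Rightarrow> nat) \<Rightarrow> nat set \<Rightarrow> nat set \<Rightarrow> bool" where
  "rack_decomp R op S T \<longleftrightarrow>
     is_subrack R op S \<and> is_subrack R op T \<and> S \<inter> T = {} \<and> S \<union> T = R"

definition rack_relations :: "(rack \<Rightarrow>\<^sub>0 int) set" where
  "rack_relations =
     {frag_of X - frag_of Y | X Y. X \<in> finite_racks \<and> Y \<in> finite_racks \<and> rack_iso X Y}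
   \<union> {frag_of (R, op) - frag_of (S, op) - frag_of (T, op) | R op S T.
        (R, op) \<in> finite_racks \<and> rack_decomp R op S T}"

definition free_racks :: "(rack \<Rightarrow>\<^sub>0 int) monoid" where
  "free_racks = free_Abelian_group finite_racks"

definition rack_rel_subgroup :: "(rack \<Rightarrow>\<^sub>0 int) set" where
  "rack_rel_subgroup = generate free_racks rack_relations"

text \<open>The Burnside ring of finite racks B(R), as an (additive, written
  multiplicatively in HOL-Algebra) abelian group: free abelian group on finite
  racks modulo the isomorphism and decomposition relations.\<close>
definition burnside_racks :: "(rack \<Rightarrow>\<^sub>0 int) set monoid" where
  "burnside_racks = free_racks Mod rack_rel_subgroup"

text \<open>A crossed G-set: carrier X, action act (act g is a bijection of X,
  extensional outside X as in HOL-Algebra's group_action), and map delta.\<close>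
type_synonym 'g crossed_set = "nat set \<times> ('g \<Rightarrow> nat \<Rightarrow> nat) \<times> (nat \<Rightarrow> 'g)"

definition crossed_sets :: "('g, 'b) monoid_scheme \<Rightarrow> 'g crossed_set set" where
  "crossed_sets G = {(X, act, \<delta>). finite X \<and> group_action G X act \<and>
      (\<forall>x\<in>X. \<delta> x \<in> carrier G) \<and>
      (\<forall>g\<in>carrier G. \<forall>x\<in>X. \<delta> (act g x) = g \<otimes>\<^bsub>G\<^esub> \<delta> x \<otimes>\<^bsub>G\<^esub> inv\<^bsub>G\<^esub> g)}"

definition crossed_iso :: "('g, 'b) monoid_scheme \<Rightarrow> 'g crossed_set \<Rightarrow> 'g crossed_set \<Rightarrow> bool" where
  "crossed_iso G A B \<longleftrightarrow>
     (case A of (X, act, \<delta>) \<Rightarrow> case B of (Y, act', \<delta>') \<Rightarrow>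
       (\<exists>f. bij_betw f X Y \<and> (\<forall>g\<in>carrier G. \<forall>x\<in>X. f (act g x) = act' g (f x)) \<and>
            (\<forall>x\<in>X. \<delta>' (f x) = \<delta> x)))"

definition crossed_restrict :: "'g crossed_set \<Rightarrow> nat set \<Rightarrow> 'g crossed_set" where
  "crossed_restrict A Y = (case A of (X, act, \<delta>) \<Rightarrow> (Y, \<lambda>g. restrict (act g) Y, \<delta>))"

definition crossed_decomp :: "('g, 'b) monoid_scheme \<Rightarrow> 'g crossed_set \<Rightarrow> nat set \<Rightarrow> nat set \<Rightarrow> bool" where
  "crossed_decomp G A Y Z \<longleftrightarrow>
     (case A of (X, act, \<delta>) \<Rightarrow>
        (\<forall>g\<in>carrier G. act g ` Y \<subseteq> Y \<and> act g ` Z \<subseteq> Z) \<and>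
        Y \<inter> Z = {} \<and> Y \<union> Z = X)"

definition crossed_relations :: "('g, 'b) monoid_scheme \<Rightarrow> ('g crossed_set \<Rightarrow>\<^sub>0 int) set" where
  "crossed_relations G =
     {frag_of A - frag_of B | A B. A \<in> crossed_sets G \<and> B \<in> crossed_sets G \<and> crossed_iso G A B}
   \<union> {frag_of A - frag_of (crossed_restrict A Y) - frag_of (crossed_restrict A Z) | A Y Z.
        A \<in> crossed_sets G \<and> crossed_decomp G A Y Z}"

definition free_crossed :: "('g, 'b) monoid_scheme \<Rightarrow> ('g crossed_set \<Rightarrow>\<^sub>0 int) monoid" where
  "free_crossed G = free_Abelian_group (crossed_sets G)"

text \<open>The crossed Burnside ring B^x(G) as an abelian group: the Grothendieck
  group of isomorphism classes of finite crossed G-sets under disjoint union,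
  presented as the free abelian group on crossed G-sets modulo isomorphism and
  disjoint-union relations.\<close>
definition crossed_burnside :: "('g, 'b) monoid_scheme \<Rightarrow> ('g crossed_set \<Rightarrow>\<^sub>0 int) set monoid" where
  "crossed_burnside G = free_crossed G Mod generate (free_crossed G) (crossed_relations G)"

definition crossed_to_rack :: "'g crossed_set \<Rightarrow> rack" where
  "crossed_to_rack A = (case A of (X, act, \<delta>) \<Rightarrow> (X, \<lambda>x y. act (\<delta> x) y))"

definition crossed_to_rack_free :: "('g crossed_set \<Rightarrow>\<^sub>0 int) \<Rightarrow> (rack \<Rightarrow>\<^sub>0 int)" where
  "crossed_to_rack_free = frag_extend (\<lambda>A. frag_of (crossed_to_rack A))"

text \<open>Induced map on the quotients: a coset C is sent to the coset of the image
  of (any of) its representatives.\<close>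
definition burnside_map :: "('g crossed_set \<Rightarrow>\<^sub>0 int) set \<Rightarrow> (rack \<Rightarrow>\<^sub>0 int) set" where
  "burnside_map C = (\<Union>c\<in>C. r_coset free_racks rack_rel_subgroup (crossed_to_rack_free c))"

end

theory Submission
  imports Defs "HOL-Algebra.Weak_Morphisms"
begin

text \<open>Every finite rack \<open>(R, \<rhd>)\<close> comes from a crossed set: let \<open>Aut(R, \<rhd>)\<close> act on \<open>R\<close>
  and put \<open>\<delta>(x) = \<ell>\<^sub>x\<close>, which is an automorphism by self-distributivity. It is equivariant
  because \<open>f \<circ> \<ell>\<^sub>x \<circ> f\<inverse> = \<ell>\<^bsub>f x\<^esub>\<close>, and the rack of this crossed set is \<open>(R, \<rhd>)\<close>
  again. Hence every generator \<open>b(R)\<close> of the Burnside ring of racks and its negative lie in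
  the image of \<open>B\<^sup>\<times>(Aut(R, \<rhd>))\<close> (the group transported to natural numbers), and sums of
  such images exhaust the whole ring. The map is well defined because isomorphisms and
  decompositions of crossed sets are isomorphisms and decompositions of the associated racks.\<close>

lemma rack_closed: "is_rack R op \<Longrightarrow> a \<in> R \<Longrightarrow> b \<in> R \<Longrightarrow> op a b \<in> R"
  unfolding is_rack_def bij_betw_def by blast

lemma is_rack_subrack:
  assumes "is_rack R op" "is_subrack R op S"
  shows "is_rack S op"
proof -
  have SR: "S \<subseteq> R" and onto: "\<And>s. s \<in> S \<Longrightarrow> op s ` S = S"
    using assms(2) by (auto simp: is_subrack_def)
  show ?thesis unfolding is_rack_def
  proof (intro conjI ballI)
    fix a assume a: "a \<in> S"
    have "inj_on (op a) S"
      using assms(1) a SR by (auto simp: is_rack_def bij_betw_def intro: inj_on_subset)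
    then show "bij_betw (op a) S S" using onto[OF a] by (simp add: bij_betw_def)
  next
    fix a b c assume "a \<in> S" "b \<in> S" "c \<in> S"
    then have "a \<in> R" "b \<in> R" "c \<in> R" using SR by auto
    then show "op a (op b c) = op (op a b) (op a c)"
      using assms(1) by (simp add: is_rack_def)
  qed
qed

definition rack_aut :: "nat set \<Rightarrow> (nat \<Rightarrow> nat \<Rightarrow> nat) \<Rightarrow> (nat \<Rightarrow> nat) set" where
  "rack_aut R op = {f \<in> Bij R. \<forall>a\<in>R. \<forall>b\<in>R. f (op a b) = op (f a) (f b)}"

lemma finite_rack_aut: "finite R \<Longrightarrow> finite (rack_aut R op)"
proof (rule finite_subset)
  show "rack_aut R op \<subseteq> PiE R (\<lambda>_. R)"
    by (auto simp: rack_aut_def PiE_def dest: Bij_imp_funcset Bij_imp_extensional)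
qed (simp add: finite_PiE)

lemma subgroup_rack_aut:
  assumes rack: "is_rack R op"
  shows "subgroup (rack_aut R op) (BijGroup R)"
proof
  show "rack_aut R op \<subseteq> carrier (BijGroup R)" by (auto simp: rack_aut_def BijGroup_def)
next
  show "\<one>\<^bsub>BijGroup R\<^esub> \<in> rack_aut R op"
    using id_Bij rack_closed[OF rack] by (simp add: BijGroup_def rack_aut_def)
next
  fix f g assume f: "f \<in> rack_aut R op" and g: "g \<in> rack_aut R op"
  then have fB: "f \<in> Bij R" and gB: "g \<in> Bij R" by (auto simp: rack_aut_def)
  have "compose R f g \<in> rack_aut R op"
    unfolding rack_aut_def
  proof (intro CollectI conjI ballI)
    show "compose R f g \<in> Bij R" by (rule compose_Bij[OF fB gB])
    fix a b assume a: "a \<in> R" and b: "b \<in> R"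
    have "g a \<in> R" "g b \<in> R" using Bij_imp_funcset[OF gB] a b by auto
    then show "compose R f g (op a b) = op (compose R f g a) (compose R f g b)"
      using f g a b rack_closed[OF rack a b] by (simp add: compose_def rack_aut_def)
  qed
  then show "f \<otimes>\<^bsub>BijGroup R\<^esub> g \<in> rack_aut R op" using fB gB by (simp add: BijGroup_def)
next
  fix f assume f: "f \<in> rack_aut R op"
  then have fB: "f \<in> Bij R" by (simp add: rack_aut_def)
  have "(\<lambda>x\<in>R. inv_into R f x) \<in> rack_aut R op"
    unfolding rack_aut_def
  proof (intro CollectI conjI ballI)
    show "(\<lambda>x\<in>R. inv_into R f x) \<in> Bij R" by (rule restrict_inv_into_Bij[OF fB])
    fix a b assume a: "a \<in> R" and b: "b \<in> R"
    have "inv_into R f (op a b) = op (inv_into R f a) (inv_into R f b)"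
      using f rack_closed[OF rack] a b by (intro Bij_inv_into_lemma[OF _ fB]) (auto simp: rack_aut_def)
    then show "(\<lambda>x\<in>R. inv_into R f x) (op a b)
        = op ((\<lambda>x\<in>R. inv_into R f x) a) ((\<lambda>x\<in>R. inv_into R f x) b)"
      using a b rack_closed[OF rack a b] by simp
  qed
  then show "inv\<^bsub>BijGroup R\<^esub> f \<in> rack_aut R op" using inv_BijGroup[OF fB] by simp
qed

lemma left_mult_in_rack_aut:
  assumes rack: "is_rack R op" and a: "a \<in> R"
  shows "restrict (op a) R \<in> rack_aut R op"
  unfolding rack_aut_def
proof (intro CollectI conjI ballI)
  have "bij_betw (op a) R R" using rack a by (simp add: is_rack_def)
  then show "restrict (op a) R \<in> Bij R" by (simp add: Bij_def)
  fix b c assume "b \<in> R" "c \<in> R"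
  moreover have "op a (op b c) = op (op a b) (op a c)"
    using rack a calculation unfolding is_rack_def by blast
  ultimately show "restrict (op a) R (op b c) = op (restrict (op a) R b) (restrict (op a) R c)"
    using rack_closed[OF rack] by simp
qed

lemma rack_aut_conj_left_mult:
  assumes rack: "is_rack R op" and f: "f \<in> rack_aut R op" and a: "a \<in> R"
  shows "compose R (compose R f (restrict (op a) R)) (\<lambda>x\<in>R. inv_into R f x)
    = restrict (op (f a)) R"
proof (rule ext)
  fix y
  have fB: "f \<in> Bij R" using f by (simp add: rack_aut_def)
  show "compose R (compose R f (restrict (op a) R)) (\<lambda>x\<in>R. inv_into R f x) y
      = restrict (op (f a)) R y"
  proof (cases "y \<in> R")
    case True
    have iy: "inv_into R f y \<in> R" by (rule Bij_inv_into_mem[OF fB True])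
    have "f (inv_into R f y) = y"
      using fB True by (simp add: Bij_def bij_betw_def f_inv_into_f)
    moreover have "f (op a (inv_into R f y)) = op (f a) (f (inv_into R f y))"
      using f a iy by (simp add: rack_aut_def)
    ultimately show ?thesis using True iy by (simp add: compose_def)
  qed (simp add: compose_def)
qed

lemma group_action_imp_group: "group_action G X act \<Longrightarrow> group G"
  by (simp add: group_action_def group_hom_def)

lemma group_action_inv_cancel:
  assumes "group_action G X act" "g \<in> carrier G" "x \<in> X"
  shows "act (inv\<^bsub>G\<^esub> g) (act g x) = x"
proof -
  interpret group_action G X act by (rule assms(1))
  have G: "group G" using assms(1) by (rule group_action_imp_group)
  have "act (inv\<^bsub>G\<^esub> g) (act g x) = act (inv\<^bsub>G\<^esub> g \<otimes>\<^bsub>G\<^esub> g) x"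
    using composition_rule assms(2,3) group.inv_closed[OF G] by simp
  also have "\<dots> = x" using id_eq_one[symmetric] assms(2,3) group.l_inv[OF G] by simp
  finally show ?thesis .
qed

lemma group_action_invariant_image:
  assumes act: "group_action G X act" and g: "g \<in> carrier G" and "Y \<subseteq> X"
    and inv: "\<forall>g\<in>carrier G. act g ` Y \<subseteq> Y"
  shows "act g ` Y = Y"
proof
  show "act g ` Y \<subseteq> Y" using inv g by blast
  show "Y \<subseteq> act g ` Y"
  proof
    fix y assume y: "y \<in> Y"
    have G: "group G" using act by (rule group_action_imp_group)
    have g': "inv\<^bsub>G\<^esub> g \<in> carrier G" by (rule group.inv_closed[OF G g])
    then have "act (inv\<^bsub>G\<^esub> g) y \<in> Y" using inv y by blast
    moreover have "act g (act (inv\<^bsub>G\<^esub> g) y) = y"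
      using group_action_inv_cancel[OF act g'] group.inv_inv[OF G g] y \<open>Y \<subseteq> X\<close> by auto
    ultimately show "y \<in> act g ` Y" by (metis image_eqI)
  qed
qed

lemma group_action_restrict:
  assumes act: "group_action G X act" and "Y \<subseteq> X"
    and inv: "\<forall>g\<in>carrier G. act g ` Y \<subseteq> Y"
  shows "group_action G Y (\<lambda>g. restrict (act g) Y)"
proof -
  interpret group_action G X act by (rule act)
  have Bij: "restrict (act g) Y \<in> Bij Y" if g: "g \<in> carrier G" for g
  proof -
    have "inj_on (act g) Y" using inj_prop[OF g] \<open>Y \<subseteq> X\<close> by (rule inj_on_subset)
    then show ?thesis
      using group_action_invariant_image[OF act g \<open>Y \<subseteq> X\<close> inv] by (simp add: Bij_def bij_betw_def)
  qed
  have "restrict (act (g \<otimes>\<^bsub>G\<^esub> h)) Y = compose Y (restrict (act g) Y) (restrict (act h) Y)"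
    if g: "g \<in> carrier G" and h: "h \<in> carrier G" for g h
  proof (rule ext)
    fix x
    show "restrict (act (g \<otimes>\<^bsub>G\<^esub> h)) Y x = compose Y (restrict (act g) Y) (restrict (act h) Y) x"
      using composition_rule[OF _ g h, of x] inv h \<open>Y \<subseteq> X\<close> by (auto simp: compose_def)
  qed
  then have "(\<lambda>g. restrict (act g) Y) \<in> hom G (BijGroup Y)"
    using Bij by (auto simp: hom_def BijGroup_def)
  moreover have "group G" using act by (rule group_action_imp_group)
  ultimately show ?thesis
    by (simp add: group_action_def group_hom_def group_hom_axioms_def group_BijGroup)
qed

lemma group_action_comp_hom:
  assumes "group_action G X act" "group H" "\<psi> \<in> hom H G"
  shows "group_action H X (act \<circ> \<psi>)"
  using assms hom_compose[of \<psi> H G act "BijGroup X"]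
  by (simp add: group_action_def group_hom_def group_hom_axioms_def)

lemma group_action_BijGroup: "group_action (BijGroup X) X (\<lambda>f. f)"
  using iso_imp_homomorphism[OF iso_set_refl]
  by (simp add: group_action_def group_hom_def group_hom_axioms_def group_BijGroup)

lemma crossed_to_rack_finite_rack:
  assumes "(X, act, \<delta>) \<in> crossed_sets G"
  shows "crossed_to_rack (X, act, \<delta>) \<in> finite_racks"
proof -
  have act: "group_action G X act" and \<delta>: "\<And>x. x \<in> X \<Longrightarrow> \<delta> x \<in> carrier G"
    and equivariant: "\<And>g x. g \<in> carrier G \<Longrightarrow> x \<in> X \<Longrightarrow> \<delta> (act g x) = g \<otimes>\<^bsub>G\<^esub> \<delta> x \<otimes>\<^bsub>G\<^esub> inv\<^bsub>G\<^esub> g"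
    using assms by (auto simp: crossed_sets_def)
  interpret group_action G X act by (rule act)
  have G: "group G" using act by (rule group_action_imp_group)
  have closed: "act g x \<in> X" if "g \<in> carrier G" "x \<in> X" for g x
    using element_image that by blast
  have "is_rack X (\<lambda>x y. act (\<delta> x) y)" unfolding is_rack_def
  proof (intro conjI ballI)
    fix a assume "a \<in> X"
    then show "bij_betw (act (\<delta> a)) X X" using bij_prop0 \<delta> by (simp add: Bij_def)
  next
    fix a b c assume abc: "a \<in> X" "b \<in> X" "c \<in> X"
    let ?a = "\<delta> a" and ?b = "\<delta> b"
    have ab: "?a \<in> carrier G" "?b \<in> carrier G" "inv\<^bsub>G\<^esub> ?a \<in> carrier G"
      using abc \<delta> group.inv_closed[OF G] by auto
    have "act (\<delta> (act ?a b)) (act ?a c) = act (?a \<otimes>\<^bsub>G\<^esub> ?b \<otimes>\<^bsub>G\<^esub> inv\<^bsub>G\<^esub> ?a) (act ?a c)"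
      using equivariant ab abc by simp
    also have "\<dots> = act ?a (act ?b (act (inv\<^bsub>G\<^esub> ?a) (act ?a c)))"
      using ab abc closed by (simp add: composition_rule monoid.m_closed[OF group.is_monoid[OF G]])
    also have "\<dots> = act ?a (act ?b c)" using group_action_inv_cancel[OF act] ab abc by simp
    finally show "act ?a (act ?b c) = act (\<delta> (act ?a b)) (act ?a c)" by simp
  qed
  then show ?thesis using assms by (simp add: crossed_to_rack_def finite_racks_def crossed_sets_def)
qed

lemma crossed_restrict_crossed_sets:
  assumes A: "(X, act, \<delta>) \<in> crossed_sets G" and "Y \<subseteq> X"
    and inv: "\<forall>g\<in>carrier G. act g ` Y \<subseteq> Y"
  shows "crossed_restrict (X, act, \<delta>) Y \<in> crossed_sets G"
proof -
  have "group_action G X act" using A by (simp add: crossed_sets_def)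
  then have "group_action G Y (\<lambda>g. restrict (act g) Y)"
    using \<open>Y \<subseteq> X\<close> inv by (rule group_action_restrict)
  moreover have "finite Y" using A \<open>Y \<subseteq> X\<close> finite_subset by (auto simp: crossed_sets_def)
  ultimately show ?thesis
    using A \<open>Y \<subseteq> X\<close> by (auto simp: crossed_sets_def crossed_restrict_def)
qed

lemma crossed_set_transfer:
  assumes A: "(X, act, \<delta>) \<in> crossed_sets H" and h: "h \<in> iso H G" and "group G"
  shows "(X, \<lambda>g. act (inv_into (carrier H) h g), \<lambda>x. h (\<delta> x)) \<in> crossed_sets G"
proof -
  let ?\<psi> = "inv_into (carrier H) h"
  have act: "group_action H X act" and \<delta>: "\<And>x. x \<in> X \<Longrightarrow> \<delta> x \<in> carrier H"
    and equivariant: "\<And>g x. g \<in> carrier H \<Longrightarrow> x \<in> X \<Longrightarrow> \<delta> (act g x) = g \<otimes>\<^bsub>H\<^esub> \<delta> x \<otimes>\<^bsub>H\<^esub> inv\<^bsub>H\<^esub> g"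
    and "finite X"
    using A by (auto simp: crossed_sets_def)
  have "group H" using act by (rule group_action_imp_group)
  interpret h: group_hom H G h
    using h \<open>group H\<close> \<open>group G\<close> by (simp add: group_hom_def group_hom_axioms_def iso_imp_homomorphism)
  have \<psi>: "?\<psi> \<in> iso G H" by (rule group.iso_set_sym[OF \<open>group H\<close> h])
  have \<psi>_carrier: "?\<psi> g \<in> carrier H" and h_\<psi>: "h (?\<psi> g) = g" if "g \<in> carrier G" for g
    using that \<psi> h by (auto simp: iso_def hom_def bij_betw_def f_inv_into_f)
  have "group_action G X (act \<circ> ?\<psi>)"
    using group_action_comp_hom[OF act \<open>group G\<close> iso_imp_homomorphism[OF \<psi>]] .
  moreover have "h (\<delta> (act (?\<psi> g) x)) = g \<otimes>\<^bsub>G\<^esub> h (\<delta> x) \<otimes>\<^bsub>G\<^esub> inv\<^bsub>G\<^esub> g"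
    if "g \<in> carrier G" "x \<in> X" for g x
    using that equivariant \<psi>_carrier h_\<psi> \<delta> by (simp add: h.hom_mult h.hom_inv)
  ultimately show ?thesis
    using \<open>finite X\<close> \<delta> by (auto simp: crossed_sets_def o_def)
qed

lemma finite_group_iso_nat_group:
  assumes "group H" "finite (carrier H)"
  obtains G :: "nat monoid" and h where "group G" "finite (carrier G)" "h \<in> iso H G"
proof -
  obtain h where "bij_betw h (carrier H) {0..<card (carrier H)}"
    using ex_bij_betw_finite_nat[OF assms(2)] by blast
  then have "inj_on h (carrier H)" by (rule bij_betw_imp_inj_on)
  show ?thesis
  proof
    show "group (image_group h H)"
      using group.inj_imp_image_group_is_group[OF assms(1) \<open>inj_on h (carrier H)\<close>] .
    show "finite (carrier (image_group h H))" using assms(2) by (simp add: image_group_carrier)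
    show "h \<in> iso H (image_group h H)" using inj_imp_image_group_iso[OF \<open>inj_on h (carrier H)\<close>] .
  qed
qed

lemma rack_aut_crossed_set:
  assumes "(R, op) \<in> finite_racks"
  shows "(R, \<lambda>f. f, \<lambda>x. restrict (op x) R) \<in> crossed_sets (BijGroup R\<lparr>carrier := rack_aut R op\<rparr>)"
proof -
  let ?Aut = "BijGroup R\<lparr>carrier := rack_aut R op\<rparr>"
  have rack: "is_rack R op" and "finite R" using assms by (auto simp: finite_racks_def)
  have sub: "subgroup (rack_aut R op) (BijGroup R)" by (rule subgroup_rack_aut[OF rack])
  have "group_action ?Aut R (\<lambda>f. f)"
    by (rule group_action.induced_action[OF group_action_BijGroup sub])
  moreover have "restrict (op (f x)) R = f \<otimes>\<^bsub>?Aut\<^esub> restrict (op x) R \<otimes>\<^bsub>?Aut\<^esub> inv\<^bsub>?Aut\<^esub> f"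
    if f: "f \<in> rack_aut R op" and x: "x \<in> R" for f x
  proof -
    have fB: "f \<in> Bij R" using f by (simp add: rack_aut_def)
    have "inv\<^bsub>?Aut\<^esub> f = (\<lambda>y\<in>R. inv_into R f y)"
      using group.m_inv_consistent[OF group_BijGroup sub f] inv_BijGroup[OF fB] by simp
    moreover have "restrict (op x) R \<in> Bij R"
      using left_mult_in_rack_aut[OF rack x] by (simp add: rack_aut_def)
    moreover have "(\<lambda>y\<in>R. inv_into R f y) \<in> Bij R" by (rule restrict_inv_into_Bij[OF fB])
    ultimately show ?thesis
      using rack_aut_conj_left_mult[OF rack f x] fB compose_Bij[OF fB]
      by (simp add: BijGroup_def)
  qed
  ultimately show ?thesis
    using \<open>finite R\<close> left_mult_in_rack_aut[OF rack] by (simp add: crossed_sets_def)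
qed

lemma finite_rack_crossed_realization:
  assumes "(R, op) \<in> finite_racks"
  obtains G :: "nat monoid" and A
  where "group G" "finite (carrier G)" "A \<in> crossed_sets G" "rack_iso (crossed_to_rack A) (R, op)"
proof -
  let ?Aut = "BijGroup R\<lparr>carrier := rack_aut R op\<rparr>"
  have rack: "is_rack R op" and "finite R" using assms by (auto simp: finite_racks_def)
  have "group ?Aut"
    using subgroup.subgroup_is_group[OF subgroup_rack_aut[OF rack] group_BijGroup] .
  moreover have "finite (carrier ?Aut)" using finite_rack_aut[OF \<open>finite R\<close>] by simp
  ultimately obtain G :: "nat monoid" and h where G: "group G" "finite (carrier G)" "h \<in> iso ?Aut G"
    by (rule finite_group_iso_nat_group)
  let ?A = "(R, \<lambda>g. inv_into (rack_aut R op) h g, \<lambda>x. h (restrict (op x) R))"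
  have "?A \<in> crossed_sets G"
    using crossed_set_transfer[OF rack_aut_crossed_set[OF assms] G(3,1)] by simp
  moreover have "inj_on h (rack_aut R op)" using G(3) by (simp add: iso_def bij_betw_def)
  then have "rack_iso (crossed_to_rack ?A) (R, op)"
    unfolding crossed_to_rack_def rack_iso_def
    by (intro exI[of _ id]) (simp add: inv_into_f_f left_mult_in_rack_aut[OF rack])
  ultimately show ?thesis using G that by blast
qed

lemma rack_relations_subset_carrier: "rack_relations \<subseteq> carrier free_racks"
proof
  fix r assume "r \<in> rack_relations"
  then show "r \<in> carrier free_racks"
  proof (unfold rack_relations_def, elim UnE CollectE exE conjE)
    fix X Y assume "r = frag_of X - frag_of Y" "X \<in> finite_racks" "Y \<in> finite_racks"
    then show ?thesis using keys_diff[of "frag_of X" "frag_of Y"]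
      by (auto simp: free_racks_def)
  next
    fix R op S T assume r: "r = frag_of (R, op) - frag_of (S, op) - frag_of (T, op)"
      and R: "(R, op) \<in> finite_racks" and decomp: "rack_decomp R op S T"
    have "(S, op) \<in> finite_racks" "(T, op) \<in> finite_racks"
      using R decomp is_rack_subrack[of R op] finite_subset
      by (auto simp: finite_racks_def rack_decomp_def is_subrack_def)
    then show ?thesis
      using r R keys_diff[of "frag_of (R, op) - frag_of (S, op)" "frag_of (T, op)"]
        keys_diff[of "frag_of (R, op)" "frag_of (S, op)"]
      by (auto simp: free_racks_def)
  qed
qed

lemma subgroup_rack_rel_subgroup: "subgroup rack_rel_subgroup free_racks"
  unfolding rack_rel_subgroup_def
  using group.generate_is_subgroup[OF _ rack_relations_subset_carrier]
  by (simp add: free_racks_def)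

lemma normal_rack_rel_subgroup: "rack_rel_subgroup \<lhd> free_racks"
  using comm_group.subgroup_imp_normal[OF abelian_free_Abelian_group subgroup_rack_rel_subgroup[unfolded free_racks_def]]
  by (simp add: free_racks_def)

lemma rack_rel_subgroup_add:
  "a \<in> rack_rel_subgroup \<Longrightarrow> b \<in> rack_rel_subgroup \<Longrightarrow> a + b \<in> rack_rel_subgroup"
  using subgroup.m_closed[OF subgroup_rack_rel_subgroup] by (simp add: free_racks_def)

lemma rack_rel_subgroup_uminus: "a \<in> rack_rel_subgroup \<Longrightarrow> - a \<in> rack_rel_subgroup"
  using subgroup.m_inv_closed[OF subgroup_rack_rel_subgroup, of a] subgroup.subset[OF subgroup_rack_rel_subgroup]
  by (auto simp: free_racks_def)

lemma rack_iso_in_rack_rel_subgroup: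
  assumes "X \<in> finite_racks" "Y \<in> finite_racks" "rack_iso X Y"
  shows "frag_of X - frag_of Y \<in> rack_rel_subgroup"
  unfolding rack_rel_subgroup_def rack_relations_def
  by (intro generate.incl UnI1) (use assms in blast)

lemma rack_decomp_in_rack_rel_subgroup:
  assumes "(R, op) \<in> finite_racks" "rack_decomp R op S T"
  shows "frag_of (R, op) - frag_of (S, op) - frag_of (T, op) \<in> rack_rel_subgroup"
  unfolding rack_rel_subgroup_def rack_relations_def
  by (intro generate.incl UnI2) (use assms in blast)

lemma crossed_relations_subset_carrier: "crossed_relations G \<subseteq> carrier (free_crossed G)"
proof
  fix r assume "r \<in> crossed_relations G"
  then show "r \<in> carrier (free_crossed G)"
  proof (unfold crossed_relations_def, elim UnE CollectE exE conjE)
    fix A B assume "r = frag_of A - frag_of B" "A \<in> crossed_sets G" "B \<in> crossed_sets G"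
    then have "Poly_Mapping.keys r \<subseteq> crossed_sets G"
      using keys_diff[of "frag_of A" "frag_of B"] unfolding keys_frag_of by blast
    then show ?thesis by (simp add: free_crossed_def)
  next
    fix A Y Z assume r: "r = frag_of A - frag_of (crossed_restrict A Y) - frag_of (crossed_restrict A Z)"
      and A: "A \<in> crossed_sets G" and decomp: "crossed_decomp G A Y Z"
    obtain X act \<delta> where A_eq: "A = (X, act, \<delta>)" by (cases A)
    have invariant: "\<forall>g\<in>carrier G. act g ` Y \<subseteq> Y" "\<forall>g\<in>carrier G. act g ` Z \<subseteq> Z"
      and "Y \<subseteq> X" "Z \<subseteq> X"
      using decomp unfolding A_eq crossed_decomp_def prod.case by blast+
    then have "crossed_restrict A Y \<in> crossed_sets G" "crossed_restrict A Z \<in> crossed_sets G"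
      using A crossed_restrict_crossed_sets[of X act \<delta> G] unfolding A_eq by simp_all
    moreover have "Poly_Mapping.keys r \<subseteq> {A, crossed_restrict A Y, crossed_restrict A Z}"
      using r keys_diff[of "frag_of A - frag_of (crossed_restrict A Y)" "frag_of (crossed_restrict A Z)"]
        keys_diff[of "frag_of A" "frag_of (crossed_restrict A Y)"] unfolding keys_frag_of by blast
    ultimately have "Poly_Mapping.keys r \<subseteq> crossed_sets G" using A by blast
    then show ?thesis by (simp add: free_crossed_def)
  qed
qed

lemma crossed_iso_rack_iso:
  assumes "A \<in> crossed_sets G" "crossed_iso G A B"
  shows "rack_iso (crossed_to_rack A) (crossed_to_rack B)"
proof -
  obtain X act \<delta> Y act' \<delta>' where AB: "A = (X, act, \<delta>)" "B = (Y, act', \<delta>')"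
    by (cases A, cases B)
  have \<delta>: "\<And>x. x \<in> X \<Longrightarrow> \<delta> x \<in> carrier G"
    using assms(1) by (simp add: AB crossed_sets_def)
  obtain f where f: "bij_betw f X Y" "\<forall>g\<in>carrier G. \<forall>x\<in>X. f (act g x) = act' g (f x)"
    "\<forall>x\<in>X. \<delta>' (f x) = \<delta> x"
    using assms(2) by (auto simp: AB crossed_iso_def)
  show ?thesis
    unfolding AB crossed_to_rack_def rack_iso_def
    using f \<delta> by (intro exI[of _ f]) simp
qed

lemma crossed_invariant_subrack:
  assumes A: "(X, act, \<delta>) \<in> crossed_sets G" and "Y \<subseteq> X"
    and inv: "\<forall>g\<in>carrier G. act g ` Y \<subseteq> Y"
  shows "is_subrack X (\<lambda>x y. act (\<delta> x) y) Y"
  unfolding is_subrack_def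
proof (intro conjI ballI)
  have act: "group_action G X act" and \<delta>: "\<And>x. x \<in> X \<Longrightarrow> \<delta> x \<in> carrier G"
    using A by (auto simp: crossed_sets_def)
  fix s assume "s \<in> Y"
  then have "\<delta> s \<in> carrier G" using \<open>Y \<subseteq> X\<close> \<delta> by blast
  from group_action_invariant_image[OF act this \<open>Y \<subseteq> X\<close> inv]
  show "(\<lambda>y. act (\<delta> s) y) ` Y = Y" by simp
qed (rule \<open>Y \<subseteq> X\<close>)

lemma crossed_decomp_rack_decomp:
  assumes A: "(X, act, \<delta>) \<in> crossed_sets G" and decomp: "crossed_decomp G (X, act, \<delta>) Y Z"
  shows "rack_decomp X (\<lambda>x y. act (\<delta> x) y) Y Z"
proof -
  from decomp have "\<forall>g\<in>carrier G. act g ` Y \<subseteq> Y" "\<forall>g\<in>carrier G. act g ` Z \<subseteq> Z"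
    "Y \<inter> Z = {}" "Y \<union> Z = X"
    unfolding crossed_decomp_def prod.case by blast+
  then show ?thesis
    unfolding rack_decomp_def using crossed_invariant_subrack[OF A] by blast
qed

lemma crossed_restrict_in_rack_rel_subgroup:
  assumes A: "(X, act, \<delta>) \<in> crossed_sets G" and "Y \<subseteq> X"
    and inv: "\<forall>g\<in>carrier G. act g ` Y \<subseteq> Y"
  shows "frag_of (Y, \<lambda>x y. act (\<delta> x) y) - frag_of (crossed_to_rack (crossed_restrict (X, act, \<delta>) Y))
    \<in> rack_rel_subgroup"
proof (rule rack_iso_in_rack_rel_subgroup)
  have "(X, \<lambda>x y. act (\<delta> x) y) \<in> finite_racks"
    using crossed_to_rack_finite_rack[OF A] by (simp add: crossed_to_rack_def)
  then show "(Y, \<lambda>x y. act (\<delta> x) y) \<in> finite_racks"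
    using crossed_invariant_subrack[OF A \<open>Y \<subseteq> X\<close> inv] is_rack_subrack finite_subset[OF \<open>Y \<subseteq> X\<close>]
    by (auto simp: finite_racks_def)
  show "crossed_to_rack (crossed_restrict (X, act, \<delta>) Y) \<in> finite_racks"
    using crossed_to_rack_finite_rack crossed_restrict_crossed_sets[OF A \<open>Y \<subseteq> X\<close> inv]
    by (simp add: crossed_restrict_def)
  show "rack_iso (Y, \<lambda>x y. act (\<delta> x) y) (crossed_to_rack (crossed_restrict (X, act, \<delta>) Y))"
    unfolding crossed_restrict_def crossed_to_rack_def rack_iso_def
    by (intro exI[of _ id]) simp
qed

lemma crossed_to_rack_free_relation:
  assumes "r \<in> crossed_relations G"
  shows "crossed_to_rack_free r \<in> rack_rel_subgroup"
  using assms
proof (unfold crossed_relations_def, elim UnE CollectE exE conjE)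
  fix A B assume "r = frag_of A - frag_of B" "A \<in> crossed_sets G" "B \<in> crossed_sets G"
    "crossed_iso G A B"
  moreover have "crossed_to_rack C \<in> finite_racks" if "C \<in> crossed_sets G" for C
    using that crossed_to_rack_finite_rack by (cases C) simp
  ultimately show ?thesis
    using rack_iso_in_rack_rel_subgroup crossed_iso_rack_iso[of A G B]
    by (simp add: crossed_to_rack_free_def frag_extend_diff)
next
  fix A Y Z assume r: "r = frag_of A - frag_of (crossed_restrict A Y) - frag_of (crossed_restrict A Z)"
    and A: "A \<in> crossed_sets G" and decomp: "crossed_decomp G A Y Z"
  obtain X act \<delta> where A_eq: "A = (X, act, \<delta>)" by (cases A)
  let ?op = "\<lambda>x y. act (\<delta> x) y"
  have A': "(X, act, \<delta>) \<in> crossed_sets G" using A A_eq by simp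
  have "\<forall>g\<in>carrier G. act g ` Y \<subseteq> Y" "\<forall>g\<in>carrier G. act g ` Z \<subseteq> Z" "Y \<subseteq> X" "Z \<subseteq> X"
    using decomp unfolding A_eq crossed_decomp_def prod.case by blast+
  note restrict_Y = crossed_restrict_in_rack_rel_subgroup[OF A' \<open>Y \<subseteq> X\<close> this(1)]
    and restrict_Z = crossed_restrict_in_rack_rel_subgroup[OF A' \<open>Z \<subseteq> X\<close> this(2)]
  have "(X, ?op) \<in> finite_racks"
    using crossed_to_rack_finite_rack[OF A'] by (simp add: crossed_to_rack_def)
  from rack_decomp_in_rack_rel_subgroup[OF this crossed_decomp_rack_decomp[OF A']]
  have "frag_of (X, ?op) - frag_of (Y, ?op) - frag_of (Z, ?op) \<in> rack_rel_subgroup"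
    using decomp A_eq by simp
  from rack_rel_subgroup_add[OF rack_rel_subgroup_add[OF this restrict_Y] restrict_Z]
  show ?thesis
    by (simp add: r A_eq crossed_to_rack_free_def frag_extend_diff crossed_to_rack_def)
qed

lemma crossed_to_rack_free_hom: "crossed_to_rack_free \<in> hom (free_crossed G) free_racks"
proof (rule homI)
  fix c assume "c \<in> carrier (free_crossed G)"
  moreover have "crossed_to_rack A \<in> finite_racks" if "A \<in> crossed_sets G" for A
    using that crossed_to_rack_finite_rack by (cases A) simp
  ultimately show "crossed_to_rack_free c \<in> carrier free_racks"
    using keys_frag_extend[of "\<lambda>A. frag_of (crossed_to_rack A)" c]
    by (force simp: free_crossed_def free_racks_def crossed_to_rack_free_def)
qed (simp add: free_crossed_def free_racks_def crossed_to_rack_free_def frag_extend_add)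

lemma crossed_to_rack_free_relation_subgroup:
  "crossed_to_rack_free ` generate (free_crossed G) (crossed_relations G) \<subseteq> rack_rel_subgroup"
proof -
  interpret group_hom "free_crossed G" free_racks crossed_to_rack_free
    using crossed_to_rack_free_hom
    by (simp add: group_hom_def group_hom_axioms_def free_crossed_def free_racks_def)
  have "crossed_to_rack_free ` crossed_relations G \<subseteq> rack_rel_subgroup"
    using crossed_to_rack_free_relation by blast
  then have "generate free_racks (crossed_to_rack_free ` crossed_relations G) \<subseteq> rack_rel_subgroup"
    by (rule H.generate_subgroup_incl[OF _ subgroup_rack_rel_subgroup])
  then show ?thesis using generate_img[OF crossed_relations_subset_carrier] by simp
qed

lemma rack_rel_coset_eqI:
  assumes "a \<in> carrier free_racks" "b - a \<in> rack_rel_subgroup"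
  shows "rack_rel_subgroup #>\<^bsub>free_racks\<^esub> b = rack_rel_subgroup #>\<^bsub>free_racks\<^esub> a"
proof -
  have "b \<in> rack_rel_subgroup #>\<^bsub>free_racks\<^esub> a"
    using assms(2) unfolding r_coset_def by (force simp: free_racks_def)
  then show ?thesis
    using group.repr_independence[OF _ _ assms(1) subgroup_rack_rel_subgroup]
    by (simp add: free_racks_def)
qed

lemma burnside_map_coset:
  assumes "d \<in> carrier (free_crossed G)"
  shows "burnside_map (generate (free_crossed G) (crossed_relations G) #>\<^bsub>free_crossed G\<^esub> d)
    = rack_rel_subgroup #>\<^bsub>free_racks\<^esub> crossed_to_rack_free d"
proof -
  let ?K = "generate (free_crossed G) (crossed_relations G)"
  have d: "crossed_to_rack_free d \<in> carrier free_racks"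
    using crossed_to_rack_free_hom assms by (rule hom_in_carrier)
  have "rack_rel_subgroup #>\<^bsub>free_racks\<^esub> crossed_to_rack_free (k + d)
      = rack_rel_subgroup #>\<^bsub>free_racks\<^esub> crossed_to_rack_free d" if "k \<in> ?K" for k
  proof (rule rack_rel_coset_eqI[OF d])
    have "crossed_to_rack_free (k + d) = crossed_to_rack_free k + crossed_to_rack_free d"
      by (simp add: crossed_to_rack_free_def frag_extend_add)
    then show "crossed_to_rack_free (k + d) - crossed_to_rack_free d \<in> rack_rel_subgroup"
      using crossed_to_rack_free_relation_subgroup that by auto
  qed
  moreover have "?K #>\<^bsub>free_crossed G\<^esub> d = (\<lambda>k. k + d) ` ?K"
    by (auto simp: r_coset_def free_crossed_def)
  moreover have "?K \<noteq> {}" using generate.one by blast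
  ultimately show ?thesis by (simp add: burnside_map_def)
qed

lemma rack_rel_coset_add:
  assumes "a \<in> carrier free_racks" "b \<in> carrier free_racks"
  shows "(rack_rel_subgroup #>\<^bsub>free_racks\<^esub> a) \<otimes>\<^bsub>burnside_racks\<^esub> (rack_rel_subgroup #>\<^bsub>free_racks\<^esub> b)
    = rack_rel_subgroup #>\<^bsub>free_racks\<^esub> (a + b)"
  using normal.rcos_sum[OF normal_rack_rel_subgroup assms]
  by (simp add: burnside_racks_def free_racks_def)

lemma group_burnside_racks: "group burnside_racks"
  unfolding burnside_racks_def by (rule normal.factorgroup_is_group[OF normal_rack_rel_subgroup])

lemma burnside_map_carrier:
  assumes "y \<in> carrier (crossed_burnside G)"
  shows "burnside_map y \<in> carrier burnside_racks"
proof -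
  obtain d where d: "d \<in> carrier (free_crossed G)"
    and y: "y = generate (free_crossed G) (crossed_relations G) #>\<^bsub>free_crossed G\<^esub> d"
    using assms unfolding crossed_burnside_def carrier_FactGroup by blast
  have "crossed_to_rack_free d \<in> carrier free_racks"
    using crossed_to_rack_free_hom d by (rule hom_in_carrier)
  then show ?thesis
    unfolding y burnside_map_coset[OF d] burnside_racks_def carrier_FactGroup by blast
qed

lemma (in monoid) foldr_mult_append:
  assumes "f ` set xs \<subseteq> carrier G" "f ` set ys \<subseteq> carrier G"
  shows "foldr (\<lambda>x acc. f x \<otimes> acc) (xs @ ys) \<one>
    = foldr (\<lambda>x acc. f x \<otimes> acc) xs \<one> \<otimes> foldr (\<lambda>x acc. f x \<otimes> acc) ys \<one>"
proof -
  have closed: "foldr (\<lambda>x acc. f x \<otimes> acc) zs b \<in> carrier G"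
    if "f ` set zs \<subseteq> carrier G" "b \<in> carrier G" for zs b
    using that by (induction zs) simp_all
  have shift: "foldr (\<lambda>x acc. f x \<otimes> acc) xs b = foldr (\<lambda>x acc. f x \<otimes> acc) xs \<one> \<otimes> b"
    if "b \<in> carrier G" for b
    using assms(1)
  proof (induction xs)
    case (Cons x xs)
    then have "f x \<in> carrier G" "f ` set xs \<subseteq> carrier G" by simp_all
    then show ?case
      using Cons.IH closed[of xs \<one>] that by (simp add: m_assoc)
  qed (simp add: that)
  show ?thesis
    unfolding foldr_append by (rule shift[OF closed[OF assms(2) one_closed]])
qed

definition crossed_image_sums :: "(rack \<Rightarrow>\<^sub>0 int) set set" where
  "crossed_image_sums =
     {foldr (\<lambda>(G, y) acc. burnside_map y \<otimes>\<^bsub>burnside_racks\<^esub> acc) ys \<one>\<^bsub>burnside_racks\<^esub> |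
        ys :: (nat monoid \<times> (nat crossed_set \<Rightarrow>\<^sub>0 int) set) list.
        \<forall>(G, y) \<in> set ys. group G \<and> finite (carrier G) \<and> y \<in> carrier (crossed_burnside G)}"

lemma one_in_crossed_image_sums: "\<one>\<^bsub>burnside_racks\<^esub> \<in> crossed_image_sums"
  unfolding crossed_image_sums_def by (rule CollectI, rule exI[of _ "[]"]) simp

lemma burnside_map_in_crossed_image_sums:
  assumes "group (G :: nat monoid)" "finite (carrier G)" "y \<in> carrier (crossed_burnside G)"
  shows "burnside_map y \<in> crossed_image_sums"
proof -
  interpret group burnside_racks by (rule group_burnside_racks)
  have "burnside_map y = burnside_map y \<otimes>\<^bsub>burnside_racks\<^esub> \<one>\<^bsub>burnside_racks\<^esub>"
    using burnside_map_carrier[OF assms(3)] by simp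
  then show ?thesis
    unfolding crossed_image_sums_def using assms by (intro CollectI exI[of _ "[(G, y)]"]) simp
qed

lemma crossed_image_sums_mult:
  assumes "a \<in> crossed_image_sums" "b \<in> crossed_image_sums"
  shows "a \<otimes>\<^bsub>burnside_racks\<^esub> b \<in> crossed_image_sums"
proof -
  interpret group burnside_racks by (rule group_burnside_racks)
  have split: "(\<lambda>(G, y) acc. burnside_map y \<otimes>\<^bsub>burnside_racks\<^esub> acc)
      = (\<lambda>p acc. burnside_map (snd p) \<otimes>\<^bsub>burnside_racks\<^esub> acc)"
    by (simp add: fun_eq_iff split: prod.split)
  obtain xs ys :: "(nat monoid \<times> (nat crossed_set \<Rightarrow>\<^sub>0 int) set) list"
    where xs: "\<forall>(G, y) \<in> set xs. group G \<and> finite (carrier G) \<and> y \<in> carrier (crossed_burnside G)"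
      "a = foldr (\<lambda>p acc. burnside_map (snd p) \<otimes>\<^bsub>burnside_racks\<^esub> acc) xs \<one>\<^bsub>burnside_racks\<^esub>"
    and ys: "\<forall>(G, y) \<in> set ys. group G \<and> finite (carrier G) \<and> y \<in> carrier (crossed_burnside G)"
      "b = foldr (\<lambda>p acc. burnside_map (snd p) \<otimes>\<^bsub>burnside_racks\<^esub> acc) ys \<one>\<^bsub>burnside_racks\<^esub>"
    using assms unfolding crossed_image_sums_def split by blast
  have carrier: "(\<lambda>p. burnside_map (snd p)) ` set zs \<subseteq> carrier burnside_racks"
    if "\<forall>(G, y) \<in> set zs. group G \<and> finite (carrier G) \<and> y \<in> carrier (crossed_burnside G)"
    for zs :: "(nat monoid \<times> (nat crossed_set \<Rightarrow>\<^sub>0 int) set) list"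
  proof (rule image_subsetI)
    fix p assume "p \<in> set zs"
    with that obtain G y where "p = (G, y)" "y \<in> carrier (crossed_burnside G)" by auto
    then show "burnside_map (snd p) \<in> carrier burnside_racks" by (simp add: burnside_map_carrier)
  qed
  have "a \<otimes>\<^bsub>burnside_racks\<^esub> b
      = foldr (\<lambda>p acc. burnside_map (snd p) \<otimes>\<^bsub>burnside_racks\<^esub> acc) (xs @ ys) \<one>\<^bsub>burnside_racks\<^esub>"
    using foldr_mult_append[OF carrier[OF xs(1)] carrier[OF ys(1)]] xs(2) ys(2) by simp
  moreover have "\<forall>(G, y) \<in> set (xs @ ys). group G \<and> finite (carrier G) \<and> y \<in> carrier (crossed_burnside G)"
    using xs(1) ys(1) by auto
  ultimately show ?thesis
    unfolding crossed_image_sums_def split by blast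
qed

lemma finite_rack_in_crossed_image_sums:
  assumes "r \<in> finite_racks"
  shows "rack_rel_subgroup #>\<^bsub>free_racks\<^esub> frag_of r \<in> crossed_image_sums"
    and "rack_rel_subgroup #>\<^bsub>free_racks\<^esub> (- frag_of r) \<in> crossed_image_sums"
proof -
  obtain R op where r: "r = (R, op)" by (cases r)
  obtain G :: "nat monoid" and A where G: "group G" "finite (carrier G)"
    and A: "A \<in> crossed_sets G" and iso: "rack_iso (crossed_to_rack A) r"
    using finite_rack_crossed_realization assms unfolding r by blast
  let ?K = "generate (free_crossed G) (crossed_relations G)"
  have rA: "crossed_to_rack A \<in> finite_racks"
    using A crossed_to_rack_finite_rack by (cases A) simp
  have rel: "frag_of (crossed_to_rack A) - frag_of r \<in> rack_rel_subgroup"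
    by (rule rack_iso_in_rack_rel_subgroup[OF rA assms iso])
  have image: "rack_rel_subgroup #>\<^bsub>free_racks\<^esub> crossed_to_rack_free c \<in> crossed_image_sums"
    if "c \<in> carrier (free_crossed G)" for c
  proof -
    have "?K #>\<^bsub>free_crossed G\<^esub> c \<in> carrier (crossed_burnside G)"
      using that unfolding crossed_burnside_def carrier_FactGroup by blast
    from burnside_map_in_crossed_image_sums[OF G this] show ?thesis
      by (simp add: burnside_map_coset[OF that])
  qed
  have A_free: "frag_of A \<in> carrier (free_crossed G)" "- frag_of A \<in> carrier (free_crossed G)"
    using A by (simp_all add: free_crossed_def)
  have rA_free: "frag_of (crossed_to_rack A) \<in> carrier free_racks"
    "- frag_of (crossed_to_rack A) \<in> carrier free_racks"
    using rA by (simp_all add: free_racks_def)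
  have "rack_rel_subgroup #>\<^bsub>free_racks\<^esub> frag_of r
      = rack_rel_subgroup #>\<^bsub>free_racks\<^esub> frag_of (crossed_to_rack A)"
    using rack_rel_coset_eqI[OF rA_free(1)] rack_rel_subgroup_uminus[OF rel] by simp
  then show "rack_rel_subgroup #>\<^bsub>free_racks\<^esub> frag_of r \<in> crossed_image_sums"
    using image[OF A_free(1)] by (simp add: crossed_to_rack_free_def)
  have "rack_rel_subgroup #>\<^bsub>free_racks\<^esub> (- frag_of r)
      = rack_rel_subgroup #>\<^bsub>free_racks\<^esub> (- frag_of (crossed_to_rack A))"
    using rack_rel_coset_eqI[OF rA_free(2)] rel by simp
  then show "rack_rel_subgroup #>\<^bsub>free_racks\<^esub> (- frag_of r) \<in> crossed_image_sums"
    using image[OF A_free(2)] by (simp add: crossed_to_rack_free_def frag_extend_minus)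
qed

lemma rack_rel_coset_in_crossed_image_sums:
  assumes "c \<in> carrier free_racks"
  shows "rack_rel_subgroup #>\<^bsub>free_racks\<^esub> c \<in> crossed_image_sums"
proof -
  have "Poly_Mapping.keys c \<subseteq> finite_racks" using assms by (simp add: free_racks_def)
  \<comment> \<open>\<open>- c\<close> is carried along: closure of the image sums under inverses is not available.\<close>
  then have "rack_rel_subgroup #>\<^bsub>free_racks\<^esub> c \<in> crossed_image_sums
    \<and> rack_rel_subgroup #>\<^bsub>free_racks\<^esub> (- c) \<in> crossed_image_sums" (is "?P c")
  proof (rule free_Abelian_group_induct)
    have "rack_rel_subgroup #>\<^bsub>free_racks\<^esub> 0 = \<one>\<^bsub>burnside_racks\<^esub>"
      using group.coset_mult_one[of free_racks rack_rel_subgroup] subgroup.subset[OF subgroup_rack_rel_subgroup]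
      by (simp add: free_racks_def burnside_racks_def)
    then show "?P 0" using one_in_crossed_image_sums by simp
  next
    fix x y assume "Poly_Mapping.keys x \<subseteq> finite_racks" "Poly_Mapping.keys y \<subseteq> finite_racks"
      and "?P x" "?P y"
    then have "x \<in> carrier free_racks" "y \<in> carrier free_racks"
      "- x \<in> carrier free_racks" "- y \<in> carrier free_racks"
      by (simp_all add: free_racks_def)
    then have "rack_rel_subgroup #>\<^bsub>free_racks\<^esub> (x - y)
        = (rack_rel_subgroup #>\<^bsub>free_racks\<^esub> x) \<otimes>\<^bsub>burnside_racks\<^esub> (rack_rel_subgroup #>\<^bsub>free_racks\<^esub> (- y))"
      and "rack_rel_subgroup #>\<^bsub>free_racks\<^esub> (- (x - y))
        = (rack_rel_subgroup #>\<^bsub>free_racks\<^esub> (- x)) \<otimes>\<^bsub>burnside_racks\<^esub> (rack_rel_subgroup #>\<^bsub>free_racks\<^esub> y)"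
      using rack_rel_coset_add by (simp_all add: add.commute)
    then show "?P (x - y)" using \<open>?P x\<close> \<open>?P y\<close> crossed_image_sums_mult by simp
  next
    fix r assume "r \<in> finite_racks"
    then show "?P (frag_of r)" by (intro conjI finite_rack_in_crossed_image_sums)
  qed
  then show ?thesis ..
qed

theorem proposition8p11:
  shows "\<forall>x \<in> carrier burnside_racks.
           \<exists>ys :: (nat monoid \<times> (nat crossed_set \<Rightarrow>\<^sub>0 int) set) list.
             (\<forall>(G, y) \<in> set ys. group G \<and> finite (carrier G) \<and> y \<in> carrier (crossed_burnside G)) \<and>
             x = foldr (\<lambda>(G, y) acc. burnside_map y \<otimes>\<^bsub>burnside_racks\<^esub> acc) ys \<one>\<^bsub>burnside_racks\<^esub>"
proof -
  have "carrier burnside_racks \<subseteq> crossed_image_sums"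
    using rack_rel_coset_in_crossed_image_sums
    unfolding burnside_racks_def carrier_FactGroup by blast
  then show ?thesis unfolding crossed_image_sums_def by blast
qed

end
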